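(* In the (heterogeneous) UAV Persistent Service model with parameters $f>0$, $c\ge0$ and displacement times $g_1,\dots,g_N>0$ satisfying $2g_i<f$, every feasible schedule (one keeping all $N$ locations covered at all times $t\ge0$) uses at least $$M_{LB}=N+\left\lceil\sum_{i=1}^N\frac{c+2g_i}{f-2g_i}\right\rceil$$ UAVs.
   Context: UAV Persistent Service model: there is a single recharging station (RS) and a finite set of $N$ aerial locations, served by identical UAVs. A UAV with a full battery can fly for at most $f$ time units; replacing/recharging its battery at the RS takes $c$ time units. Flying between the RS and location $i$ (either direction) takes $g_i$ time units. A UAV's activity consists of sorties: it leaves the RS fully charged, flies to one location, stays there (covering it), and flies back to the RS, with total airborne time of the sortie at most $f$; it then spends $c$ time units recharging at the RS (possibly followed by idle time) before its next sortie. At time $0$ each UAV is fully charged, either at the RS or at a location. A location is covered at time $t$ if some UAV is present at it at time $t$. A schedule is feasible if every location is covered at every time $t\ge0$. *)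

theory Defs
  imports Complex_Main "HOL-Library.Extended_Nat"
begin

text \<open>
  Schedule of a single UAV.  Its activity is a (finite or infinite) sequence of
  sorties, indexed by k with enat k < nsort.  Sortie k serves location sloc k,
  the UAV is present at that location exactly during [sarr k, sdep k]
  (arrival and departure at the location).  For an ordinary sortie the UAV
  leaves the RS at sarr k - g and is back at the RS at sdep k + g.
  If starts_at_loc holds, the UAV is at location sloc 0 at time 0 with a full
  battery, i.e. sortie 0 begins at the location at time 0 (no outbound leg).
\<close>
record uav_sched =
  nsort :: enat
  sloc :: "nat \<Rightarrow> nat"
  sarr :: "nat \<Rightarrow> real"
  sdep :: "nat \<Rightarrow> real"
  starts_at_loc :: bool

definition valid_uav ::
  "nat \<Rightarrow> (nat \<Rightarrow> real) \<Rightarrow> real \<Rightarrow> real \<Rightarrow> uav_sched \<Rightarrow> bool" where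
  "valid_uav N g f c s \<longleftrightarrow>
     (starts_at_loc s \<longrightarrow> nsort s > 0) \<and>
     (\<forall>k. enat k < nsort s \<longrightarrow> sloc s k < N \<and> sarr s k \<le> sdep s k) \<and>
     \<comment> \<open>first sortie\<close>
     (nsort s > 0 \<longrightarrow>
        (if starts_at_loc s
         then sarr s 0 = 0 \<and> sdep s 0 + g (sloc s 0) - 0 \<le> f
         else 0 \<le> sarr s 0 - g (sloc s 0) \<and>
              (sdep s 0 + g (sloc s 0)) - (sarr s 0 - g (sloc s 0)) \<le> f)) \<and>
     \<comment> \<open>later sorties: airborne time at most f, and recharging of c time units
         at the RS between return and next departure\<close>
     (\<forall>k. enat (Suc k) < nsort s \<longrightarrow>
        (sdep s (Suc k) + g (sloc s (Suc k))) - (sarr s (Suc k) - g (sloc s (Suc k))) \<le> f \<and>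
        sdep s k + g (sloc s k) + c \<le> sarr s (Suc k) - g (sloc s (Suc k)))"

definition covered :: "nat \<Rightarrow> (nat \<Rightarrow> uav_sched) \<Rightarrow> nat \<Rightarrow> real \<Rightarrow> bool" where
  "covered M \<sigma> i t \<longleftrightarrow>
     (\<exists>u<M. \<exists>k. enat k < nsort (\<sigma> u) \<and> sloc (\<sigma> u) k = i \<and>
                 sarr (\<sigma> u) k \<le> t \<and> t \<le> sdep (\<sigma> u) k)"

definition feasible ::
  "nat \<Rightarrow> (nat \<Rightarrow> real) \<Rightarrow> real \<Rightarrow> real \<Rightarrow> nat \<Rightarrow> (nat \<Rightarrow> uav_sched) \<Rightarrow> bool" where
  "feasible N g f c M \<sigma> \<longleftrightarrow>
     (\<forall>u<M. valid_uav N g f c (\<sigma> u)) \<and>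
     (\<forall>i<N. \<forall>t\<ge>0. covered M \<sigma> i t)"

end

theory Submission
  imports Defs "HOL-Analysis.Analysis"
begin

text \<open>
  Give location \<open>i\<close> the weight \<open>w\<^sub>i = (f + c) / (f - 2 g\<^sub>i) = 1 + (c + 2 g\<^sub>i) / (f - 2 g\<^sub>i)\<close>.
  A sortie serving \<open>i\<close> for \<open>L \<le> f - 2 g\<^sub>i\<close> time units keeps its UAV busy for
  \<open>L + 2 g\<^sub>i + c \<ge> w\<^sub>i L\<close> time units (flights and recharge), and consecutive such
  cycles of one UAV do not overlap.  Hence, up to a boundary term independent of \<open>T\<close>,
  every UAV accumulates weighted service at most \<open>T\<close> during \<open>[0, T]\<close>, while
  feasibility forces the service at each location \<open>i\<close> to total at least \<open>T\<close>.
  Comparing the two and letting \<open>T \<rightarrow> \<infinity>\<close> gives \<open>\<Sum>\<^sub>i w\<^sub>i \<le> M\<close>.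
\<close>

lemma length_le_sum_of_covering_intervals:
  fixes a b :: "'i \<Rightarrow> real"
  assumes "finite I" and "{x<..y} \<subseteq> (\<Union>j\<in>I. {a j..b j})"
    and "\<And>j. j \<in> I \<Longrightarrow> a j \<le> b j"
  shows "y - x \<le> (\<Sum>j\<in>I. b j - a j)"
proof (cases "x \<le> y")
  case True
  have Icc: "{a j..b j} \<in> fmeasurable lborel" for j
    by (simp add: fmeasurable_def emeasure_lborel_Icc_eq)
  have "y - x = measure lborel {x<..y}"
    using True by simp
  also have "\<dots> \<le> measure lborel (\<Union>j\<in>I. {a j..b j})"
    using assms(1,2) Icc by (intro measure_mono_fmeasurable fmeasurable.finite_UN) auto
  also have "\<dots> \<le> (\<Sum>j\<in>I. measure lborel {a j..b j})"
    using assms(1) by (intro measure_UNION_le) auto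
  also have "\<dots> = (\<Sum>j\<in>I. b j - a j)"
    using assms(3) by simp
  finally show ?thesis .
next
  case False
  then show ?thesis
    using assms(3) by (smt (verit) sum_nonneg)
qed

lemma sum_lengths_le_span:
  fixes a b :: "nat \<Rightarrow> real"
  assumes "\<And>k. k < m \<Longrightarrow> b k \<le> a (Suc k)"
  shows "(\<Sum>k<Suc m. b k - a k) \<le> b m - a 0"
  using assms
proof (induction m)
  case 0
  then show ?case by simp
next
  case (Suc m)
  then have "(\<Sum>k<Suc m. b k - a k) \<le> b m - a 0" and "b m \<le> a (Suc m)"
    by simp_all
  then show ?case by simp
qed

lemma le_if_forall_pos_mult_le_add:
  fixes x y C :: real
  assumes "\<And>T. 0 < T \<Longrightarrow> T * x \<le> T * y + C"
  shows "x \<le> y"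
proof (rule ccontr)
  assume "\<not> x \<le> y"
  then have pos: "0 < x - y" by simp
  define T where "T = \<bar>C\<bar> / (x - y) + 1"
  have "0 < T"
    unfolding T_def using pos by (simp add: add_nonneg_pos)
  then have "T * (x - y) \<le> \<bar>C\<bar>"
    using assms[of T] by (simp add: algebra_simps)
  then have "T \<le> \<bar>C\<bar> / (x - y)"
    using pos by (simp add: pos_le_divide_eq)
  then show False
    unfolding T_def by simp
qed

lemma divide_mult_le_add_diff:
  fixes a d L :: real
  assumes "0 < d" and "d \<le> a" and "L \<le> d"
  shows "a / d * L \<le> L + (a - d)"
proof -
  have "(a - d) * L \<le> (a - d) * d"
    using assms by (intro mult_left_mono) auto
  then have "a * L \<le> (L + (a - d)) * d"
    by (simp add: algebra_simps)
  then show ?thesis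
    using assms(1) by (simp add: pos_divide_le_eq)
qed

definition location_weight :: "real \<Rightarrow> real \<Rightarrow> (nat \<Rightarrow> real) \<Rightarrow> nat \<Rightarrow> real" where
  "location_weight f c g i = (f + c) / (f - 2 * g i)"

definition weighted_service :: "(nat \<Rightarrow> real) \<Rightarrow> (nat \<Rightarrow> uav_sched) \<Rightarrow> nat \<times> nat \<Rightarrow> real" where
  "weighted_service w \<sigma> = (\<lambda>(u, k). w (sloc (\<sigma> u) k) * (sdep (\<sigma> u) k - sarr (\<sigma> u) k))"

definition sorties_until :: "nat \<Rightarrow> (nat \<Rightarrow> uav_sched) \<Rightarrow> real \<Rightarrow> (nat \<times> nat) set" where
  "sorties_until M \<sigma> T = {(u, k). u < M \<and> enat k < nsort (\<sigma> u) \<and> sarr (\<sigma> u) k \<le> T}"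

context
  fixes N :: nat and g :: "nat \<Rightarrow> real" and f c :: real and s :: uav_sched
  assumes valid: "valid_uav N g f c s"
    and g_pos: "\<And>i. i < N \<Longrightarrow> 0 < g i"
    and c_nonneg: "0 \<le> c"
begin

lemma sortie_loc_less: "enat k < nsort s \<Longrightarrow> sloc s k < N"
  and sortie_arr_le_dep: "enat k < nsort s \<Longrightarrow> sarr s k \<le> sdep s k"
  using valid by (auto simp: valid_uav_def)

lemma sortie_recharge:
  "enat (Suc k) < nsort s \<Longrightarrow> sdep s k + g (sloc s k) + c \<le> sarr s (Suc k) - g (sloc s (Suc k))"
  using valid by (auto simp: valid_uav_def)

lemma later_sortie_length_le:
  "enat (Suc k) < nsort s \<Longrightarrow> sdep s (Suc k) - sarr s (Suc k) \<le> f - 2 * g (sloc s (Suc k))"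
  using valid by (auto simp: valid_uav_def)

lemma sortie_loc_g_pos: "enat k < nsort s \<Longrightarrow> 0 < g (sloc s k)"
  using g_pos sortie_loc_less by blast

lemma first_sortie_arr_nonneg: "0 < nsort s \<Longrightarrow> 0 \<le> sarr s 0"
  using valid sortie_loc_g_pos[of 0]
  by (auto simp: valid_uav_def zero_enat_def split: if_splits)

lemma sortie_return_le:
  assumes "enat k < nsort s"
  shows "sdep s k + g (sloc s k) \<le> sarr s k + f"
proof (cases k)
  case 0
  then show ?thesis
    using assms valid sortie_loc_g_pos[of 0]
    by (auto simp: valid_uav_def zero_enat_def split: if_splits)
next
  case (Suc j)
  then show ?thesis
    using assms later_sortie_length_le[of j] sortie_loc_g_pos[of k] by simp
qed

lemma sortie_arr_step:
  assumes "enat (Suc k) < nsort s"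
  shows "sarr s k + g (sloc s (Suc k)) \<le> sarr s (Suc k)"
proof -
  have "enat k < nsort s"
    using assms Suc_ile_eq less_imp_le by blast
  then show ?thesis
    using sortie_recharge[OF assms] sortie_arr_le_dep[of k] sortie_loc_g_pos[of k] c_nonneg
    by linarith
qed

lemma sortie_arr_mono:
  assumes "j \<le> k" and "enat k < nsort s"
  shows "sarr s j \<le> sarr s k"
  using assms
proof (induction k rule: dec_induct)
  case base
  then show ?case by simp
next
  case (step k)
  then have "enat k < nsort s"
    using Suc_ile_eq less_imp_le by blast
  then show ?case
    using step sortie_arr_step[of k] sortie_loc_g_pos[of "Suc k"] by fastforce
qed

lemma sortie_arr_ge:
  assumes "\<And>i. i < N \<Longrightarrow> \<delta> \<le> g i" and "enat k < nsort s"
  shows "real k * \<delta> \<le> sarr s k"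
  using assms(2)
proof (induction k)
  case 0
  then show ?case
    using first_sortie_arr_nonneg by (simp add: zero_enat_def)
next
  case (Suc k)
  then have "real k * \<delta> \<le> sarr s k"
    using Suc_ile_eq less_imp_le by blast
  then show ?case
    using Suc.prems sortie_arr_step[of k] assms(1)[OF sortie_loc_less[of "Suc k"]]
    by (simp add: algebra_simps)
qed

lemma arrivals_until_eq_lessThan: "\<exists>n. {k. enat k < nsort s \<and> sarr s k \<le> T} = {..<n}"
proof -
  define K where "K = {k. enat k < nsort s \<and> sarr s k \<le> T}"
  \<comment> \<open>The \<open>1\<close> only keeps the set nonempty when \<open>N = 0\<close>.\<close>
  define \<delta> where "\<delta> = Min (insert 1 (g ` {..<N}))"
  have \<delta>_pos: "0 < \<delta>"
    unfolding \<delta>_def using g_pos by (subst Min_gr_iff) auto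
  have \<delta>_le: "\<delta> \<le> g i" if "i < N" for i
    unfolding \<delta>_def using that by (intro Min_le) auto
  have "K \<subseteq> {..nat \<lceil>T / \<delta>\<rceil>}"
  proof
    fix k assume "k \<in> K"
    then have "real k * \<delta> \<le> T"
      using sortie_arr_ge[OF \<delta>_le] unfolding K_def by (fastforce dest: order_trans)
    then have "real k \<le> T / \<delta>"
      using \<delta>_pos by (simp add: pos_le_divide_eq)
    then show "k \<in> {..nat \<lceil>T / \<delta>\<rceil>}"
      by (simp add: le_nat_iff ceiling_le_iff le_ceiling_iff)
  qed
  then have fin: "finite K"
    using finite_subset by blast
  have down_closed: "{..k} \<subseteq> K" if "k \<in> K" for k
  proof
    fix j assume "j \<in> {..k}"
    then have "enat j < nsort s"
      using that unfolding K_def by (auto intro: order.strict_trans1[of "enat j" "enat k"])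
    then show "j \<in> K"
      using that \<open>j \<in> {..k}\<close> sortie_arr_mono unfolding K_def by fastforce
  qed
  have "K \<subseteq> {..<card K}"
  proof
    fix k assume "k \<in> K"
    then have "card {..k} \<le> card K"
      using down_closed fin by (intro card_mono) auto
    then show "k \<in> {..<card K}" by simp
  qed
  then have "K = {..<card K}"
    by (intro card_subset_eq) auto
  then show ?thesis
    unfolding K_def by blast
qed

lemma uav_weighted_service_le:
  assumes "0 \<le> f" and short: "\<And>i. i < N \<Longrightarrow> 2 * g i < f"
    and W: "\<And>i. i < N \<Longrightarrow> location_weight f c g i \<le> W" and "0 \<le> W" and "0 \<le> T"
    and prefix: "\<And>k. k < n \<Longrightarrow> enat k < nsort s \<and> sarr s k \<le> T"
  shows "(\<Sum>k<n. location_weight f c g (sloc s k) * (sdep s k - sarr s k)) \<le> T + 2 * f + c + W * f"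
proof (cases n)
  case 0
  then show ?thesis
    using assms(1,4,5) c_nonneg by simp
next
  case (Suc m)
  define w where "w k = location_weight f c g (sloc s k)" for k
  define start where "start k = sarr s k - g (sloc s k)" for k
  define finish where "finish k = sdep s k + g (sloc s k) + c" for k
  have sortie: "enat k < nsort s" "sloc s k < N" "0 < g (sloc s k)" "sarr s k \<le> sdep s k"
    if "k < n" for k
    using prefix[OF that] sortie_loc_less sortie_loc_g_pos sortie_arr_le_dep by auto
  \<comment> \<open>The first sortie may begin at its location, so the bound \<open>f - 2 g\<close> on its length is
    not available; it is charged \<open>W f\<close> instead.\<close>
  have weighted_le_cycle:
    "w k * (sdep s k - sarr s k) \<le> (finish k - start k) + (if k = 0 then W * f else 0)"
    if "k < n" for k
  proof (cases k)
    case 0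
    have "w k * (sdep s k - sarr s k) \<le> W * f"
    proof (rule mult_mono)
      show "w k \<le> W"
        unfolding w_def using W sortie(2)[OF that] by blast
      show "sdep s k - sarr s k \<le> f"
        using sortie_return_le[OF sortie(1)[OF that]] sortie(3)[OF that] by simp
    qed (use sortie(4)[OF that] assms(4) in auto)
    then show ?thesis
      using 0 sortie[OF that] c_nonneg unfolding start_def finish_def by simp
  next
    case (Suc j)
    have "2 * g (sloc s k) < f"
      using short sortie(2)[OF that] by blast
    then have "(f + c) / (f - 2 * g (sloc s k)) * (sdep s k - sarr s k)
        \<le> (sdep s k - sarr s k) + ((f + c) - (f - 2 * g (sloc s k)))"
      using later_sortie_length_le[of j] sortie(1,3)[OF that] Suc c_nonneg
      by (intro divide_mult_le_add_diff) auto
    then show ?thesis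
      using Suc unfolding w_def location_weight_def start_def finish_def by simp
  qed
  have "(\<Sum>k<n. w k * (sdep s k - sarr s k))
      \<le> (\<Sum>k<n. (finish k - start k) + (if k = 0 then W * f else 0))"
    by (intro sum_mono weighted_le_cycle) simp
  also have "\<dots> = (\<Sum>k<Suc m. finish k - start k) + W * f"
    using Suc by (simp add: sum.distrib)
  also have "(\<Sum>k<Suc m. finish k - start k) \<le> finish m - start 0"
    using sortie_recharge prefix Suc unfolding start_def finish_def
    by (intro sum_lengths_le_span) auto
  also have "finish m - start 0 \<le> T + 2 * f + c"
  proof -
    have "finish m \<le> T + f + c"
      using sortie_return_le[of m] prefix[of m] Suc unfolding finish_def by force
    moreover have "- start 0 \<le> f"
      using first_sortie_arr_nonneg short[of "sloc s 0"] sortie[of 0] Suc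
      unfolding start_def by force
    ultimately show ?thesis by linarith
  qed
  finally show ?thesis
    unfolding w_def by simp
qed

end


lemma location_service_ge:
  assumes feasible: "feasible N g f c M \<sigma>" and "i < N"
    and fin: "finite (sorties_until M \<sigma> T)"
  shows "T \<le> (\<Sum>(u, k)\<in>{(u, k) \<in> sorties_until M \<sigma> T. sloc (\<sigma> u) k = i}.
                  sdep (\<sigma> u) k - sarr (\<sigma> u) k)"
proof -
  let ?I = "{(u, k) \<in> sorties_until M \<sigma> T. sloc (\<sigma> u) k = i}"
  let ?arr = "\<lambda>(u, k). sarr (\<sigma> u) k" and ?dep = "\<lambda>(u, k). sdep (\<sigma> u) k"
  have "T - 0 \<le> (\<Sum>p\<in>?I. ?dep p - ?arr p)"
  proof (rule length_le_sum_of_covering_intervals)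
    show "finite ?I"
      using fin by (rule finite_subset[rotated]) auto
    show "{0<..T} \<subseteq> (\<Union>p\<in>?I. {?arr p..?dep p})"
    proof
      fix t assume "t \<in> {0<..T}"
      then have "covered M \<sigma> i t"
        using feasible \<open>i < N\<close> unfolding feasible_def by auto
      then obtain u k where "u < M" "enat k < nsort (\<sigma> u)" "sloc (\<sigma> u) k = i"
        "sarr (\<sigma> u) k \<le> t" "t \<le> sdep (\<sigma> u) k"
        unfolding covered_def by blast
      with \<open>t \<in> {0<..T}\<close> show "t \<in> (\<Union>p\<in>?I. {?arr p..?dep p})"
        unfolding sorties_until_def by force
    qed
    show "?arr p \<le> ?dep p" if "p \<in> ?I" for p
      using that feasible sortie_arr_le_dep
      unfolding feasible_def sorties_until_def by (auto simp: valid_uav_def)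
  qed
  then show ?thesis
    by (simp add: split_def)
qed

lemma sum_weighted_service_le:
  assumes valid: "\<And>u. u < M \<Longrightarrow> valid_uav N g f c (\<sigma> u)"
    and g_pos: "\<And>i. i < N \<Longrightarrow> 0 < g i" and "0 \<le> c" and "0 \<le> f"
    and short: "\<And>i. i < N \<Longrightarrow> 2 * g i < f"
    and W: "\<And>i. i < N \<Longrightarrow> location_weight f c g i \<le> W" and "0 \<le> W" and "0 \<le> T"
  shows "finite (sorties_until M \<sigma> T)"
    and "sum (weighted_service (location_weight f c g) \<sigma>) (sorties_until M \<sigma> T)
          \<le> real M * (T + 2 * f + c + W * f)"
proof -
  define K where "K u = {k. enat k < nsort (\<sigma> u) \<and> sarr (\<sigma> u) k \<le> T}" for u
  have Sigma: "sorties_until M \<sigma> T = (SIGMA u:{..<M}. K u)"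
    unfolding K_def sorties_until_def by auto
  have K_lessThan: "\<exists>n. K u = {..<n}" if "u < M" for u
    using arrivals_until_eq_lessThan[OF valid[OF that] g_pos assms(3)] unfolding K_def by blast
  then have fin_K: "finite (K u)" if "u < M" for u
    using that by (metis finite_lessThan)
  then show "finite (sorties_until M \<sigma> T)"
    unfolding Sigma by (intro finite_SigmaI) auto
  have per_uav: "(\<Sum>k\<in>K u. weighted_service (location_weight f c g) \<sigma> (u, k)) \<le> T + 2 * f + c + W * f"
    if u: "u < M" for u
  proof -
    obtain n where n: "K u = {..<n}"
      using K_lessThan[OF u] by blast
    have prefix: "enat k < nsort (\<sigma> u) \<and> sarr (\<sigma> u) k \<le> T" if "k < n" for k
    proof -
      have "k \<in> K u"
        using n that by simp
      then show ?thesis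
        unfolding K_def by simp
    qed
    show ?thesis
      unfolding n weighted_service_def
      using uav_weighted_service_le[OF valid[OF u] g_pos assms(3,4) short W assms(7,8) prefix] by simp
  qed
  have "sum (weighted_service (location_weight f c g) \<sigma>) (sorties_until M \<sigma> T)
      = (\<Sum>u<M. \<Sum>k\<in>K u. weighted_service (location_weight f c g) \<sigma> (u, k))"
    unfolding Sigma by (subst sum.Sigma) (auto simp: fin_K)
  also have "\<dots> \<le> (\<Sum>u<M. T + 2 * f + c + W * f)"
    using per_uav by (intro sum_mono) simp
  finally show "sum (weighted_service (location_weight f c g) \<sigma>) (sorties_until M \<sigma> T)
      \<le> real M * (T + 2 * f + c + W * f)"
    by simp
qed

lemma sum_weighted_service_ge:
  fixes w :: "nat \<Rightarrow> real"
  assumes feasible: "feasible N g f c M \<sigma>" and fin: "finite (sorties_until M \<sigma> T)"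
    and w_nonneg: "\<And>i. i < N \<Longrightarrow> 0 \<le> w i"
  shows "T * (\<Sum>i<N. w i) \<le> sum (weighted_service w \<sigma>) (sorties_until M \<sigma> T)"
proof -
  define P where "P = sorties_until M \<sigma> T"
  define loc where "loc = (\<lambda>(u, k). sloc (\<sigma> u) k)"
  define len where "len = (\<lambda>(u, k). sdep (\<sigma> u) k - sarr (\<sigma> u) k)"
  have at_loc: "{(u, k) \<in> P. sloc (\<sigma> u) k = i} = {p \<in> P. loc p = i}" for i
    unfolding loc_def by auto
  have loc_P: "loc ` P \<subseteq> {..<N}"
    using feasible sortie_loc_less
    unfolding P_def loc_def sorties_until_def feasible_def by (fastforce simp: valid_uav_def)
  have service: "T \<le> sum len {p \<in> P. loc p = i}" if "i < N" for i
    using location_service_ge[OF feasible that fin] unfolding P_def[symmetric] len_def[symmetric] at_loc .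
  have "T * (\<Sum>i<N. w i) = (\<Sum>i<N. w i * T)"
    by (simp add: sum_distrib_left mult.commute)
  also have "\<dots> \<le> (\<Sum>i<N. w i * sum len {p \<in> P. loc p = i})"
    using service w_nonneg by (intro sum_mono mult_left_mono) auto
  also have "\<dots> = (\<Sum>i<N. \<Sum>p\<in>{p \<in> P. loc p = i}. w (loc p) * len p)"
    by (auto simp: sum_distrib_left intro!: sum.cong)
  also have "\<dots> = (\<Sum>p\<in>P. w (loc p) * len p)"
    using fin loc_P unfolding P_def by (intro sum.group) auto
  also have "(\<lambda>p. w (loc p) * len p) = weighted_service w \<sigma>"
    by (auto simp: loc_def len_def weighted_service_def)
  finally show ?thesis
    unfolding P_def .
qed

lemma location_weight_eq:
  "2 * g i < f \<Longrightarrow> location_weight f c g i = 1 + (c + 2 * g i) / (f - 2 * g i)"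
  unfolding location_weight_def by (simp add: field_simps)

lemma feasible_location_weights_bound:
  assumes feasible: "feasible N g f c M \<sigma>"
    and "0 < f" and "0 \<le> c" and g_pos: "\<And>i. i < N \<Longrightarrow> 0 < g i"
    and short: "\<And>i. i < N \<Longrightarrow> 2 * g i < f" and "0 < T"
  defines "S \<equiv> \<Sum>i<N. location_weight f c g i"
  shows "T * S \<le> real M * (T + 2 * f + c + S * f)"
proof -
  have w_nonneg: "0 \<le> location_weight f c g i" if "i < N" for i
    using assms(3) g_pos[OF that] short[OF that] by (simp add: location_weight_eq)
  then have w_le_S: "location_weight f c g i \<le> S" if "i < N" for i
    unfolding S_def using that by (intro member_le_sum) auto
  have "0 \<le> S"
    unfolding S_def using w_nonneg by (intro sum_nonneg) auto
  have valid: "\<And>u. u < M \<Longrightarrow> valid_uav N g f c (\<sigma> u)"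
    using feasible unfolding feasible_def by blast
  have fin: "finite (sorties_until M \<sigma> T)"
    using valid assms(2-6) w_le_S \<open>0 \<le> S\<close>
    by (intro sum_weighted_service_le(1)[where N = N and g = g and f = f and c = c and W = S]) auto
  have "T * S \<le> sum (weighted_service (location_weight f c g) \<sigma>) (sorties_until M \<sigma> T)"
    unfolding S_def using feasible fin w_nonneg by (rule sum_weighted_service_ge)
  also have "\<dots> \<le> real M * (T + 2 * f + c + S * f)"
    using valid assms(2-6) w_le_S \<open>0 \<le> S\<close> by (intro sum_weighted_service_le(2)) auto
  finally show ?thesis .
qed

theorem theorem4:
  fixes N M :: nat and g :: "nat \<Rightarrow> real" and f c :: real
    and \<sigma> :: "nat \<Rightarrow> uav_sched"
  assumes "f > 0" and "c \<ge> 0"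
    and "\<And>i. i < N \<Longrightarrow> g i > 0"
    and "\<And>i. i < N \<Longrightarrow> 2 * g i < f"
    and "feasible N g f c M \<sigma>"
  shows "int M \<ge> int N + \<lceil>\<Sum>i<N. (c + 2 * g i) / (f - 2 * g i)\<rceil>"
proof -
  define S where "S = (\<Sum>i<N. location_weight f c g i)"
  have "S \<le> real M"
  proof (rule le_if_forall_pos_mult_le_add)
    fix T :: real
    assume "0 < T"
    with feasible_location_weights_bound[OF assms(5,1-4)]
    show "T * S \<le> T * real M + real M * (2 * f + c + S * f)"
      unfolding S_def by (simp add: algebra_simps)
  qed
  moreover have "S = real N + (\<Sum>i<N. (c + 2 * g i) / (f - 2 * g i))"
    unfolding S_def using assms(4) by (simp add: location_weight_eq sum.distrib)
  ultimately have "\<lceil>\<Sum>i<N. (c + 2 * g i) / (f - 2 * g i)\<rceil> \<le> int M - int N"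
    by (intro ceiling_le) simp
  then show ?thesis
    by simp
qed

end
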